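(* Let $K_t,K_r,M_r,N_t$ be positive integers with $N_t\le K_rM_r$. Consider $K_t$ transmitters with $N_t$ antennas each and $K_r$ receivers with $M_r$ antennas each, where $\mathbf{H}_{jk}\in\mathbb{C}^{M_r\times N_t}$ denotes the channel matrix from transmitter $k$ to receiver $j$, with all entries of all channel matrices i.i.d. zero-mean unit-variance circularly symmetric complex Gaussian. Let $\kappa_t$ be an integer with $0\le \kappa_t\le K_t-1$ satisfying \[ (K_t-1)N_t\le K_r(K_t-\kappa_t)M_r<K_tN_t, \] and let $d$ be a positive integer satisfying \[ d\le K_tN_t-K_r(K_t-\kappa_t)M_r . \] Then almost surely there exist precoders $\mathbf{V}_k\in\mathbb{C}^{N_t\times d}$, $k=1,\dots,K_t$, such that each $\mathbf{V}_k$ has full column rank $d$ and \[ \dim\Big(\mathcal{C}\big(\mathbf{H}_{j1}\mathbf{V}_1,\mathbf{H}_{j2}\mathbf{V}_2,\dots,\mathbf{H}_{jK_t}\mathbf{V}_{K_t}\big)\Big)\le\kappa_t d\qquad\text{for all } j=1,\dots,K_r . \]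
   Context: $\mathcal{C}(\mathbf{A}_1,\dots,\mathbf{A}_n)$ denotes the column space of the horizontally concatenated matrix $[\mathbf{A}_1\ \mathbf{A}_2\ \cdots\ \mathbf{A}_n]$. *)

theory Defs
  imports "HOL-Probability.Probability" "Jordan_Normal_Form.DL_Rank"
begin

definition cgauss :: "complex measure" where
  "cgauss = density lborel (\<lambda>z. ennreal (exp (- (cmod z)\<^sup>2) / pi))"

text \<open>Index set of all channel entries (j,k,m,n): receiver j, transmitter k, row m, column n (0-based).\<close>
definition chan_idx :: "nat \<Rightarrow> nat \<Rightarrow> nat \<Rightarrow> nat \<Rightarrow> (nat \<times> nat \<times> nat \<times> nat) set" where
  "chan_idx Kr Kt Mr Nt = {..<Kr} \<times> {..<Kt} \<times> {..<Mr} \<times> {..<Nt}"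

definition channel_measure :: "nat \<Rightarrow> nat \<Rightarrow> nat \<Rightarrow> nat \<Rightarrow> ((nat \<times> nat \<times> nat \<times> nat) \<Rightarrow> complex) measure" where
  "channel_measure Kr Kt Mr Nt = PiM (chan_idx Kr Kt Mr Nt) (\<lambda>_. cgauss)"

definition channel :: "nat \<Rightarrow> nat \<Rightarrow> ((nat \<times> nat \<times> nat \<times> nat) \<Rightarrow> complex) \<Rightarrow> nat \<Rightarrow> nat \<Rightarrow> complex mat" where
  "channel Mr Nt w j k = mat Mr Nt (\<lambda>(m, n). w (j, k, m, n))"

text \<open>Horizontal concatenation [B 0, B 1, ..., B (K-1)] of K matrices each with d columns.\<close>
definition hcat :: "nat \<Rightarrow> nat \<Rightarrow> (nat \<Rightarrow> 'a mat) \<Rightarrow> 'a mat" where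
  "hcat K d B = mat (dim_row (B 0)) (K * d) (\<lambda>(i, c). B (c div d) $$ (i, c mod d))"

end

theory Submission
  imports Defs "HOL-Library.Function_Algebras" "HOL-Computational_Algebra.Polynomial"
begin

text \<open>Stack the precoders \<open>v\<^sub>k\<close> (columns of \<open>V\<^sub>k\<close>) into one vector of length \<open>Kt Nt\<close>. The
  \<open>Kr (Kt - \<kappa>) Mr\<close> scalar equations \<open>\<Sum>\<^sub>k k\<^sup>l H\<^sub>j\<^sub>k v\<^sub>k = 0\<close> for \<open>j < Kr\<close>, \<open>l < Kt - \<kappa>\<close> force,
  by Vandermonde elimination over the distinct nodes \<open>0, \<dots>, Kt - 1\<close>, every \<open>H\<^sub>j\<^sub>k v\<^sub>k\<close> to be a
  fixed linear combination of the \<open>H\<^sub>j\<^sub>k v\<^sub>k\<close> with \<open>k < \<kappa>\<close>. Taking \<open>d\<close> independent solutions as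
  columns therefore gives precoders whose received signals span at most \<open>\<kappa> d\<close> dimensions at
  every receiver. Each \<open>V\<^sub>k\<close> has full rank unless some nonzero solution vanishes on block \<open>k\<close>;
  this is excluded by the nonvanishing of a Gram determinant, a polynomial in the channel
  entries. An explicit channel realisation shows that this polynomial is not identically zero,
  and a nonzero polynomial vanishes only on a null set of the Gaussian product measure.\<close>

section \<open>Polynomial functions of finitely many complex variables\<close>

inductive polyfun :: "'i set \<Rightarrow> (('i \<Rightarrow> complex) \<Rightarrow> complex) \<Rightarrow> bool" for I where
  polyfun_const: "polyfun I (\<lambda>_. c)"
| polyfun_var: "i \<in> I \<Longrightarrow> polyfun I (\<lambda>w. w i)"
| polyfun_add: "polyfun I f \<Longrightarrow> polyfun I g \<Longrightarrow> polyfun I (\<lambda>w. f w + g w)"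
| polyfun_mult: "polyfun I f \<Longrightarrow> polyfun I g \<Longrightarrow> polyfun I (\<lambda>w. f w * g w)"

lemma polyfun_sum:
  "finite S \<Longrightarrow> (\<And>s. s \<in> S \<Longrightarrow> polyfun I (f s)) \<Longrightarrow> polyfun I (\<lambda>w. \<Sum>s\<in>S. f s w)"
  by (induction S rule: finite_induct) (auto intro: polyfun.intros)

lemma polyfun_prod:
  "finite S \<Longrightarrow> (\<And>s. s \<in> S \<Longrightarrow> polyfun I (f s)) \<Longrightarrow> polyfun I (\<lambda>w. \<Prod>s\<in>S. f s w)"
  by (induction S rule: finite_induct) (auto intro: polyfun.intros)

lemma polyfun_cong: "polyfun I f \<Longrightarrow> (\<And>i. i \<in> I \<Longrightarrow> w i = w' i) \<Longrightarrow> f w = f w'"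
  by (induction rule: polyfun.induct) auto

lemma sum_fun_apply: "(\<Sum>s\<in>S. f s) x = (\<Sum>s\<in>S. f s x)"
  by (induction S rule: infinite_finite_induct) auto

lemma poly_fun_apply: "poly p x w = poly (map_poly (\<lambda>c. c w) p) (x w)"
  by (induction p) (auto simp: map_poly_pCons)

lemma polyfun_insert_poly:
  assumes "polyfun (insert i J) f" "i \<notin> J"
  shows "\<exists>p. (\<forall>n. polyfun J (coeff p n)) \<and> f = poly p (\<lambda>w. w i)"
  using assms(1)
proof (induction rule: polyfun.induct)
  case (polyfun_const c)
  show ?case
    by (rule exI[of _ "[:(\<lambda>_. c):]"])
      (auto simp: coeff_pCons zero_fun_def split: nat.splits intro: polyfun.intros)
next
  case (polyfun_var j)
  show ?case
  proof (cases "j = i")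
    case True
    show ?thesis
      by (rule exI[of _ "[:0, 1:]"])
        (auto simp: True coeff_pCons zero_fun_def one_fun_def split: nat.splits intro: polyfun.intros)
  next
    case False
    with polyfun_var have "j \<in> J" by auto
    then show ?thesis
      by (intro exI[of _ "[:(\<lambda>w. w j):]"])
        (auto simp: coeff_pCons zero_fun_def split: nat.splits intro: polyfun.intros)
  qed
next
  case (polyfun_add f g)
  then obtain p q where p: "\<forall>n. polyfun J (coeff p n)" "f = poly p (\<lambda>w. w i)"
    and q: "\<forall>n. polyfun J (coeff q n)" "g = poly q (\<lambda>w. w i)" by blast
  show ?case
    by (intro exI[of _ "p + q"]) (auto simp: p q intro: polyfun.intros)
next
  case (polyfun_mult f g)
  then obtain p q where p: "\<forall>n. polyfun J (coeff p n)" "f = poly p (\<lambda>w. w i)"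
    and q: "\<forall>n. polyfun J (coeff q n)" "g = poly q (\<lambda>w. w i)" by blast
  have "polyfun J (\<lambda>w. \<Sum>k\<le>n. coeff p k w * coeff q (n - k) w)" for n
    using p q by (intro polyfun_sum polyfun.polyfun_mult) auto
  moreover have "coeff (p * q) n = (\<lambda>w. \<Sum>k\<le>n. coeff p k w * coeff q (n - k) w)" for n
    by (simp add: coeff_mult sum_fun_apply fun_eq_iff)
  ultimately have "polyfun J (coeff (p * q) n)" for n
    by simp
  then show ?case
    by (intro exI[of _ "p * q"]) (auto simp: p q)
qed

lemma polyfun_measurable:
  assumes "\<And>i. sets (M i) = sets borel" and "polyfun I f"
  shows "f \<in> borel_measurable (PiM I M)"
  using assms(2)
proof (induction rule: polyfun.induct)
  case (polyfun_var i)
  then show ?case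
    using measurable_component_singleton[of i I M] measurable_cong_sets[OF refl assms(1)] by blast
qed auto

lemma (in product_sigma_finite) AE_PiM_insertI:
  assumes "finite J" "i \<notin> J" and P: "Measurable.pred (PiM (insert i J) M) P"
    and "AE x in PiM J M. AE y in PiM {i} M. P (merge J {i} (x, y))"
  shows "AE w in PiM (insert i J) M. P w"
proof -
  interpret pair_sigma_finite "PiM J M" "PiM {i} M"
  proof -
    interpret A: finite_product_sigma_finite M J by standard fact
    interpret B: finite_product_sigma_finite M "{i}" by standard simp
    show "pair_sigma_finite (PiM J M) (PiM {i} M)" by standard
  qed
  have P': "Measurable.pred (PiM (J \<union> {i}) M) P"
    using P by simp
  have "AE z in PiM J M \<Otimes>\<^sub>M PiM {i} M. P (merge J {i} z)"
    using assms(4) measurable_compose[OF measurable_merge P'] by (intro AE_pair_measure) simp_all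
  then have "AE w in distr (PiM J M \<Otimes>\<^sub>M PiM {i} M) (PiM (J \<union> {i}) M) (merge J {i}). P w"
    by (subst AE_distr_iff[OF measurable_merge P'[unfolded pred_def]])
  moreover have "distr (PiM J M \<Otimes>\<^sub>M PiM {i} M) (PiM (J \<union> {i}) M) (merge J {i}) = PiM (J \<union> {i}) M"
    using assms(1,2) by (intro distr_merge) auto
  ultimately have "AE w in PiM (J \<union> {i}) M. P w"
    by (simp only:)
  then show ?thesis
    by (subst insert_is_Un, subst Un_commute)
qed

lemma AE_poly_component_nonzero:
  fixes M :: "'i \<Rightarrow> complex measure"
  assumes "product_sigma_finite M"
    and "sets (M i) = sets borel" "\<And>A. finite A \<Longrightarrow> AE z in M i. z \<notin> A" "q \<noteq> 0"
  shows "AE y in PiM {i} M. poly q (y i) \<noteq> 0"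
proof -
  interpret product_sigma_finite M by fact
  have "AE z in M i. poly q z \<noteq> 0"
    using assms(3)[OF poly_roots_finite[OF assms(4)]] by simp
  moreover have "Measurable.pred (M i) (\<lambda>z. poly q z \<noteq> 0)"
    using borel_measurable_continuous_onI[OF continuous_on_poly[OF continuous_on_id]]
    unfolding measurable_cong_sets[OF assms(2) refl] by measurable
  ultimately show ?thesis
    by (subst (asm) distr_singleton[symmetric], subst (asm) AE_distr_iff)
      (auto intro!: measurable_component_singleton)
qed

lemma polyfun_merge_eq_poly:
  assumes p: "\<And>n. polyfun J (coeff p n)" and "i \<notin> J"
  shows "poly p (\<lambda>w. w i) (merge J {i} (x, y)) = poly (map_poly (\<lambda>c. c x) p) (y i)"
proof -
  have "coeff p k (merge J {i} (x, y)) = coeff p k x" for k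
    by (rule polyfun_cong[OF p]) (auto simp: merge_def)
  then have "map_poly (\<lambda>c. c (merge J {i} (x, y))) p = map_poly (\<lambda>c. c x) p"
    by (intro poly_eqI) (simp add: coeff_map_poly zero_fun_def)
  moreover have "merge J {i} (x, y) i = y i"
    using assms(2) by (simp add: merge_def)
  ultimately show ?thesis
    by (simp add: poly_fun_apply[of p "\<lambda>w. w i"])
qed

text \<open>By Fubini and induction on the variables, since a nonzero univariate polynomial has
  finitely many roots.\<close>
lemma AE_polyfun_nonzero:
  fixes M :: "'i \<Rightarrow> complex measure"
  assumes "product_sigma_finite M"
    and sets_M: "\<And>i. sets (M i) = sets borel"
    and finite_null: "\<And>i A. finite A \<Longrightarrow> AE z in M i. z \<notin> A"
    and "finite I" "polyfun I f" "f w0 \<noteq> 0"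
  shows "AE w in PiM I M. f w \<noteq> 0"
  using assms(4-)
proof (induction I arbitrary: f w0 rule: finite_induct)
  case empty
  have "f w = f w0" for w
    by (rule polyfun_cong[OF empty(1)]) simp
  then show ?case
    using empty(2) by (intro AE_I2) metis
next
  case (insert i J)
  interpret product_sigma_finite M by fact
  obtain p where p: "\<And>n. polyfun J (coeff p n)" and f: "f = poly p (\<lambda>w. w i)"
    using polyfun_insert_poly[OF insert(4,2)] by blast
  have "map_poly (\<lambda>c. c w0) p \<noteq> 0"
    using insert(5) f poly_fun_apply[of p "\<lambda>w. w i" w0] by auto
  then obtain n where "coeff (map_poly (\<lambda>c. c w0) p) n \<noteq> 0"
    by (meson leading_coeff_neq_0)
  then have "coeff p n w0 \<noteq> 0"
    by (simp add: coeff_map_poly zero_fun_def)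
  then have "AE x in PiM J M. coeff p n x \<noteq> 0"
    by (rule insert(3)[OF p])
  then have AE_merge: "AE x in PiM J M. AE y in PiM {i} M. f (merge J {i} (x, y)) \<noteq> 0"
  proof (rule eventually_mono)
    fix x assume "coeff p n x \<noteq> 0"
    then have "map_poly (\<lambda>c. c x) p \<noteq> 0"
      by (metis coeff_0 coeff_map_poly zero_fun_def)
    then show "AE y in PiM {i} M. f (merge J {i} (x, y)) \<noteq> 0"
      unfolding f polyfun_merge_eq_poly[OF p insert(2)]
      using AE_poly_component_nonzero[OF assms(1) sets_M[of i] finite_null[where i=i]] by blast
  qed
  have "Measurable.pred (PiM (insert i J) M) (\<lambda>w. f w \<noteq> 0)"
    using polyfun_measurable[OF sets_M insert(4)] by measurable
  then show ?case
    by (rule AE_PiM_insertI[OF insert(1,2) _ AE_merge])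
qed

lemma polyfun_det:
  assumes "\<And>w. F w \<in> carrier_mat n n"
    and "\<And>a b. a < n \<Longrightarrow> b < n \<Longrightarrow> polyfun I (\<lambda>w. F w $$ (a, b))"
  shows "polyfun I (\<lambda>w. det (F w))"
proof -
  have "polyfun I (\<lambda>w. \<Sum>p\<in>{p. p permutes {0..<n}}. signof p * (\<Prod>i\<in>{0..<n}. F w $$ (i, p i)))"
    using assms(2) permutes_in_image
    by (intro polyfun_sum polyfun_mult polyfun_const polyfun_prod finite_permutations) fastforce+
  moreover have "det (F w) = (\<Sum>p\<in>{p. p permutes {0..<n}}. signof p * (\<Prod>i\<in>{0..<n}. F w $$ (i, p i)))"
    for w
    using assms(1)[of w] unfolding det_def by auto
  ultimately show ?thesis
    by simp
qed

section \<open>Linear algebra\<close>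

lemma mult_mat_vec_index_sum:
  "A \<in> carrier_mat nr nc \<Longrightarrow> v \<in> carrier_vec nc \<Longrightarrow> r < nr \<Longrightarrow>
    (A *\<^sub>v v) $ r = (\<Sum>c<nc. A $$ (r, c) * v $ c)"
  by (auto simp: scalar_prod_def atLeast0LessThan intro!: sum.cong)

lemma mult_mat_index_sum:
  "A \<in> carrier_mat nr n \<Longrightarrow> B \<in> carrier_mat n nc \<Longrightarrow> i < nr \<Longrightarrow> j < nc \<Longrightarrow>
    (A * B) $$ (i, j) = (\<Sum>k<n. A $$ (i, k) * B $$ (k, j))"
  by (auto simp: scalar_prod_def atLeast0LessThan intro!: sum.cong)

lemma mult_mat_vec_unit_vec:
  fixes A :: "'a::semiring_1 mat"
  shows "A \<in> carrier_mat nr nc \<Longrightarrow> i < nc \<Longrightarrow> A *\<^sub>v unit_vec nc i = col A i"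
  by (intro eq_vecI) auto

lemma block_index_less:
  fixes k s K N :: nat
  assumes "k < K" "s < N"
  shows "k * N + s < K * N"
proof -
  have "k * N + s < Suc k * N"
    using assms(2) by simp
  also have "\<dots> \<le> K * N"
    using assms(1) by (intro mult_le_mono1) simp
  finally show ?thesis .
qed

lemma sum_blocks: "(\<Sum>t<a * b. f t) = (\<Sum>k<a. \<Sum>s<b. f (k * b + s :: nat))"
proof -
  have "(\<Sum>s<b. f (k * b + s)) = sum f {k * b..<k * b + b}" for k
    using sum.shift_bounds_nat_ivl[of f 0 "k * b" b] by (simp add: atLeast0LessThan add.commute)
  then show ?thesis
    using sum.nat_group[of f b a] by simp
qed

lemma (in vec_space) rank_le_if_cols_in_col_space:
  assumes A: "A \<in> carrier_mat n na" and B: "B \<in> carrier_mat n nb"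
    and cols: "set (cols A) \<subseteq> col_space B"
  shows "rank A \<le> rank B"
proof -
  let ?W = "span (set (cols B))"
  have cols_B: "set (cols B) \<subseteq> carrier_vec n"
    using B cols_dim by blast
  have vs_W: "vectorspace class_ring (vs ?W)"
    using span_is_subspace[THEN subspace_is_vs, OF cols_B] by auto
  have cols_A: "set (cols A) \<subseteq> ?W"
    using cols unfolding col_space_def .
  have "subspace class_ring (span (set (cols A))) (vs ?W)"
    using vectorspace.span_is_subspace[OF vs_W, of "set (cols A)",
        unfolded span_li_not_depend(1)[OF cols_A span_is_submodule[OF cols_B]]] cols_A
    by simp
  moreover have "vectorspace.fin_dim class_ring (vs ?W)"
    "vectorspace.fin_dim class_ring (vs ?W\<lparr>carrier := span (set (cols A))\<rparr>)"
    using fin_dim_span_cols A B by auto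
  ultimately show ?thesis
    unfolding rank_def using vectorspace.subspace_dim[OF vs_W] by simp
qed

lemma (in vec_space) rank_eq_dim_col_if_kernel_trivial:
  assumes A: "A \<in> carrier_mat n nc"
    and ker: "\<And>v. v \<in> carrier_vec nc \<Longrightarrow> A *\<^sub>v v = 0\<^sub>v n \<Longrightarrow> v = 0\<^sub>v nc"
  shows "rank A = nc"
proof -
  have "distinct (cols A)"
  proof (rule ccontr)
    assume "\<not> distinct (cols A)"
    then obtain i j where ij: "i < nc" "j < nc" "i \<noteq> j" "col A i = col A j"
      using A by (metis cols_length cols_nth distinct_conv_nth carrier_matD(2))
    define u :: "'a vec" where "u = unit_vec nc i - unit_vec nc j"
    have "A *\<^sub>v u = col A i - col A j"
      using A ij unfolding u_def by (simp add: mult_minus_distrib_mat_vec mult_mat_vec_unit_vec)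
    also have "\<dots> = 0\<^sub>v n"
      using A ij by simp
    finally have "u = 0\<^sub>v nc"
      by (rule ker[rotated]) (simp add: u_def)
    then have "u $ i = 0"
      using ij by simp
    then show False
      using ij unfolding u_def by simp
  qed
  moreover have "lin_indpt (set (cols A))"
    using lin_depE[OF A _ \<open>distinct (cols A)\<close>] ker by metis
  ultimately show ?thesis
    using lin_indpt_full_rank[OF A] by blast
qed

lemma card_non_pivot_columns:
  assumes C: "C \<in> carrier_mat nr nc" and "row_echelon_form C"
  shows "nc - nr \<le> card ({..<nc} - snd ` set (pivot_positions C))"
proof -
  obtain f where "pivot_fun C f nc"
    using assms unfolding row_echelon_form_def by auto
  then have "snd ` set (pivot_positions C) \<subseteq> f ` {..<nr}"
    using pivot_positions(1)[OF C] by auto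
  then have "card (snd ` set (pivot_positions C)) \<le> nr"
    by (metis card_image_le card_lessThan finite_lessThan le_trans card_mono finite_imageI)
  then show ?thesis
    using diff_card_le_card_Diff[of "snd ` set (pivot_positions C)" "{..<nc}"] by auto
qed

lemma mult_mat_vec_eq_0_if_unit_rows:
  fixes B :: "'a::semiring_1 mat"
  assumes B: "B \<in> carrier_mat nc d" and a: "a \<in> carrier_vec d" and "B *\<^sub>v a = 0\<^sub>v nc"
    and g: "\<And>c. c < d \<Longrightarrow> g c < nc"
    and unit: "\<And>c c'. c < d \<Longrightarrow> c' < d \<Longrightarrow> B $$ (g c, c') = of_bool (c' = c)"
  shows "a = 0\<^sub>v d"
proof (rule eq_vecI)
  fix c assume "c < dim_vec (0\<^sub>v d)"
  then have c: "c < d" by simp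
  have "0 = (B *\<^sub>v a) $ g c"
    using assms(3) g[OF c] by simp
  also have "\<dots> = (\<Sum>c'<d. B $$ (g c, c') * a $ c')"
    by (rule mult_mat_vec_index_sum[OF B a g[OF c]])
  also have "\<dots> = a $ c"
    using c unit[OF c] by (simp add: of_bool_def if_distrib[of "\<lambda>x. x * _"] cong: if_cong)
  finally show "a $ c = 0\<^sub>v d $ c"
    using c by simp
qed (use a in simp)

lemma kernel_basis_mat_exists:
  fixes A :: "'a::field mat"
  assumes A: "A \<in> carrier_mat nr nc" and "nr + d \<le> nc"
  shows "\<exists>B \<in> carrier_mat nc d. A * B = 0\<^sub>m nr d \<and>
    (\<forall>a \<in> carrier_vec d. B *\<^sub>v a = 0\<^sub>v nc \<longrightarrow> a = 0\<^sub>v d)"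
proof -
  obtain C where gj: "gauss_jordan_single A = C" by auto
  note G = gauss_jordan_single[OF A gj]
  define pp where "pp = pivot_positions C"
  have "d \<le> card ({..<nc} - snd ` set pp)"
    using card_non_pivot_columns[of C nr nc] G(2,3) assms(2) unfolding pp_def by auto
  then obtain S where S: "S \<subseteq> {..<nc} - snd ` set pp" "card S = d"
    by (metis obtain_subset_with_card_n)
  then obtain g where g: "bij_betw g {..<d} S"
    by (metis finite_Diff finite_lessThan finite_subset ex_bij_betw_nat_finite lessThan_atLeast0)
  have g_free: "g c < nc" "g c \<notin> snd ` set pp" if "c < d" for c
    using g S that unfolding bij_betw_def by auto
  define B where "B = mat nc d (\<lambda>(t, c). non_pivot_base C pp (g c) $ t)"
  note npb = non_pivot_base[OF G(3,2), folded pp_def, OF g_free]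
  have B: "B \<in> carrier_mat nc d" unfolding B_def by simp
  have col_B: "col B c = non_pivot_base C pp (g c)" if "c < d" for c
    using npb(1)[OF that] that unfolding B_def by (auto intro!: eq_vecI)
  have "A * B = 0\<^sub>m nr d"
  proof (rule eq_matI)
    fix i c assume "i < dim_row (0\<^sub>m nr d)" "c < dim_col (0\<^sub>m nr d)"
    then have "i < nr" "c < d" by auto
    have "A *\<^sub>v col B c = 0\<^sub>v nr"
      using G(1)[OF npb(1)[OF \<open>c < d\<close>]] npb(3)[OF \<open>c < d\<close>] col_B[OF \<open>c < d\<close>] \<open>c < d\<close>
      by simp
    then show "(A * B) $$ (i, c) = 0\<^sub>m nr d $$ (i, c)"
      using \<open>i < nr\<close> \<open>c < d\<close> A B by (metis index_mult_mat(1) index_mult_mat_vec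
          index_zero_mat(1) index_zero_vec(1) carrier_matD)
  qed (use A B in auto)
  moreover have "B $$ (g c, c') = of_bool (c' = c)" if "c < d" "c' < d" for c c'
  proof -
    have "c' \<noteq> c \<Longrightarrow> g c \<noteq> g c'"
      using g that unfolding bij_betw_def inj_on_def by auto
    then show ?thesis
      using npb(2) npb(4)[of c' "g c"] g_free that unfolding B_def by auto
  qed
  ultimately show ?thesis
    using B g_free(1) by (blast intro: mult_mat_vec_eq_0_if_unit_rows)
qed

lemma det_transpose_mult_nonzero_imp_kernel_trivial:
  fixes A :: "'a::idom mat"
  assumes A: "A \<in> carrier_mat nr nc" and "det (transpose_mat A * A) \<noteq> 0"
    and v: "v \<in> carrier_vec nc" and "A *\<^sub>v v = 0\<^sub>v nr"
  shows "v = 0\<^sub>v nc"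
proof -
  have "(transpose_mat A * A) *\<^sub>v v = transpose_mat A *\<^sub>v 0\<^sub>v nr"
    using assms by (simp add: assoc_mult_mat_vec[of _ nc nr _ nc])
  also have "\<dots> = 0\<^sub>v nc"
    using A by (intro eq_vecI) auto
  finally show ?thesis
    using assms det_0_iff_vec_prod_zero[of "transpose_mat A * A" nc] by auto
qed

text \<open>With self-conjugate entries \<open>A\<^sup>T A = A\<^sup>H A\<close> is a Gram matrix.\<close>
lemma det_transpose_mult_nonzero_if_self_conjugate:
  fixes A :: "'a::conjugatable_ordered_field mat"
  assumes A: "A \<in> carrier_mat nr nc"
    and self_conj: "\<And>i j. i < nr \<Longrightarrow> j < nc \<Longrightarrow> conjugate (A $$ (i, j)) = A $$ (i, j)"
    and ker: "\<And>v. v \<in> carrier_vec nc \<Longrightarrow> A *\<^sub>v v = 0\<^sub>v nr \<Longrightarrow> v = 0\<^sub>v nc"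
  shows "det (transpose_mat A * A) \<noteq> 0"
proof
  assume "det (transpose_mat A * A) = 0"
  then obtain v where v: "v \<in> carrier_vec nc" "v \<noteq> 0\<^sub>v nc" "(transpose_mat A * A) *\<^sub>v v = 0\<^sub>v nc"
    using det_0_iff_vec_prod_zero[of "transpose_mat A * A" nc] A by auto
  define y where "y = A *\<^sub>v v"
  have y: "y \<in> carrier_vec nr"
    using A v unfolding y_def by simp
  have At_y: "transpose_mat A *\<^sub>v y = 0\<^sub>v nc"
    using A v unfolding y_def by (simp add: assoc_mult_mat_vec[of _ nc nr _ nc])
  have "conjugate y = A *\<^sub>v conjugate v"
  proof (rule eq_vecI)
    fix i assume "i < dim_vec (A *\<^sub>v conjugate v)"
    then have i: "i < nr" using A by simp
    have "conjugate (row A i) = row A i"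
      using A i self_conj by (intro eq_vecI) auto
    then show "conjugate y $ i = (A *\<^sub>v conjugate v) $ i"
      using A v i conjugate_sprod_vec[of "row A i" nc v] unfolding y_def by simp
  qed (use A v y in simp)
  then have "y \<bullet>c y = (transpose_mat A *\<^sub>v y) \<bullet> conjugate v"
    using transpose_vec_mult_scalar[OF A _ y, of "conjugate v"] v by simp
  also have "\<dots> = 0"
    using At_y v by simp
  finally have "y = 0\<^sub>v nr"
    using y by simp
  then show False
    using ker v unfolding y_def by blast
qed

definition row_block :: "nat \<Rightarrow> nat \<Rightarrow> 'a mat \<Rightarrow> 'a mat" where
  "row_block N k B = mat N (dim_col B) (\<lambda>(s, c). B $$ (k * N + s, c))"

lemma row_block_carrier [simp]: "row_block N k B \<in> carrier_mat N (dim_col B)"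
  unfolding row_block_def by simp

lemma row_block_mult_mat_vec:
  assumes "s < N" "k * N + s < dim_row B" "a \<in> carrier_vec (dim_col B)"
  shows "(row_block N k B *\<^sub>v a) $ s = (B *\<^sub>v a) $ (k * N + s)"
  using assms unfolding row_block_def by (auto simp: row_def scalar_prod_def)

lemma hcat_mult_vec_block_coeffs:
  fixes B :: "nat \<Rightarrow> 'a::comm_semiring_0 mat"
  assumes "dim_row (B 0) = n" "i < n" "c < d"
  shows "(hcat K d B *\<^sub>v vec (K * d) (\<lambda>t. if t mod d = c then \<gamma> (t div d) else 0)) $ i =
    (\<Sum>k<K. \<gamma> k * B k $$ (i, c))"
proof -
  let ?x = "vec (K * d) (\<lambda>t. if t mod d = c then \<gamma> (t div d) else 0)"
  have H: "hcat K d B \<in> carrier_mat n (K * d)"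
    unfolding hcat_def assms(1) by simp
  have "(hcat K d B *\<^sub>v ?x) $ i = (\<Sum>t<K * d. hcat K d B $$ (i, t) * ?x $ t)"
    by (rule mult_mat_vec_index_sum[OF H _ assms(2)]) simp
  also have "\<dots> = (\<Sum>k<K. \<Sum>c'<d. hcat K d B $$ (i, k * d + c') * ?x $ (k * d + c'))"
    by (rule sum_blocks)
  also have "\<dots> = (\<Sum>k<K. \<Sum>c'<d. if c' = c then \<gamma> k * B k $$ (i, c') else 0)"
    using assms block_index_less[of _ K _ d] unfolding hcat_def
    by (intro sum.cong refl) (auto simp: mult.commute)
  also have "\<dots> = (\<Sum>k<K. \<gamma> k * B k $$ (i, c))"
    using assms(3) by simp
  finally show ?thesis .
qed

lemma rank_hcat_le_if_blocks_span:
  fixes B :: "nat \<Rightarrow> 'a::field mat"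
  assumes "0 < K" and B: "\<And>k. k < K \<Longrightarrow> B k \<in> carrier_mat n d"
    and span: "\<And>k i c. k < K \<Longrightarrow> i < n \<Longrightarrow> c < d \<Longrightarrow>
      B k $$ (i, c) = (\<Sum>k'<\<kappa>. \<beta> k k' * B k' $$ (i, c))"
  shows "vec_space.rank n (hcat K d B) \<le> \<kappa> * d"
proof -
  have rows_B: "dim_row (B 0) = n"
    using B[OF \<open>0 < K\<close>] by simp
  have H: "hcat K d B \<in> carrier_mat n (K * d)" and P: "hcat \<kappa> d B \<in> carrier_mat n (\<kappa> * d)"
    unfolding hcat_def rows_B by simp_all
  have "col (hcat K d B) q \<in> vec_space.col_space n (hcat \<kappa> d B)" if q: "q < K * d" for q
  proof -
    have "0 < d"
      using q by (cases d) auto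
    then have q_split: "q div d < K" "q mod d < d"
      using q by (simp_all add: less_mult_imp_div_less)
    let ?x = "vec (\<kappa> * d) (\<lambda>t. if t mod d = q mod d then \<beta> (q div d) (t div d) else 0)"
    have "hcat \<kappa> d B *\<^sub>v ?x = col (hcat K d B) q"
    proof (rule eq_vecI)
      fix i assume "i < dim_vec (col (hcat K d B) q)"
      then have i: "i < n"
        using H by simp
      show "(hcat \<kappa> d B *\<^sub>v ?x) $ i = col (hcat K d B) q $ i"
        unfolding hcat_mult_vec_block_coeffs[where B=B, OF rows_B i q_split(2)]
        using span[OF q_split(1) i q_split(2)] i q unfolding hcat_def rows_B by simp
    qed (use H P in simp)
    then show ?thesis
      unfolding vec_space.col_space_eq[OF P] using H P q by auto
  qed
  then have "vec_space.rank n (hcat K d B) \<le> vec_space.rank n (hcat \<kappa> d B)"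
    using H by (intro vec_space.rank_le_if_cols_in_col_space[OF H P]) (auto simp: cols_def)
  also have "\<dots> \<le> \<kappa> * d"
    by (rule vec_space.rank_le_nc[OF P])
  finally show ?thesis .
qed

section \<open>Vandermonde elimination\<close>

definition node_poly :: "('b \<Rightarrow> 'a::comm_ring_1) \<Rightarrow> 'b set \<Rightarrow> 'a poly" where
  "node_poly x S = (\<Prod>k\<in>S. [:- x k, 1:])"

lemma degree_node_poly: "finite S \<Longrightarrow> degree (node_poly (x :: 'b \<Rightarrow> 'a::idom) S) = card S"
  unfolding node_poly_def by (subst degree_prod_eq_sum_degree) auto

lemma poly_node_poly_eq_0: "finite S \<Longrightarrow> k \<in> S \<Longrightarrow> poly (node_poly x S) (x k) = 0"
  unfolding node_poly_def poly_prod by (rule prod_zero) auto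

lemma poly_node_poly_nonzero:
  fixes x :: "'b \<Rightarrow> 'a::idom"
  shows "finite S \<Longrightarrow> k \<notin> S \<Longrightarrow> inj_on x (insert k S) \<Longrightarrow> poly (node_poly x S) (x k) \<noteq> 0"
  unfolding node_poly_def poly_prod by (auto simp: inj_on_def)

lemma sum_poly_eq_0_if_power_sums_eq_0:
  fixes x c :: "'b \<Rightarrow> 'a::comm_semiring_1"
  assumes "\<And>l. l < m \<Longrightarrow> (\<Sum>k\<in>K. x k ^ l * c k) = 0" and "degree p < m"
  shows "(\<Sum>k\<in>K. poly p (x k) * c k) = 0"
proof -
  have "(\<Sum>k\<in>K. poly p (x k) * c k) = (\<Sum>k\<in>K. \<Sum>l\<le>degree p. coeff p l * (x k ^ l * c k))"
    by (simp add: poly_altdef sum_distrib_right mult.assoc)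
  also have "\<dots> = (\<Sum>l\<le>degree p. coeff p l * (\<Sum>k\<in>K. x k ^ l * c k))"
    by (subst sum.swap) (simp add: sum_distrib_left)
  also have "\<dots> = 0"
    using assms by (intro sum.neutral) auto
  finally show ?thesis .
qed

lemma power_sums_eq_0_node_poly:
  fixes x c :: "'b \<Rightarrow> 'a::idom"
  assumes moments: "\<And>l. l < m \<Longrightarrow> (\<Sum>k\<in>K. x k ^ l * c k) = 0"
    and "finite K" "T \<subseteq> K" "k \<in> T" "card T \<le> m"
  shows "poly (node_poly x (T - {k})) (x k) * c k
    + (\<Sum>k'\<in>K - T. poly (node_poly x (T - {k})) (x k') * c k') = 0"
proof -
  let ?p = "node_poly x (T - {k})"
  have fin_T: "finite T"
    using assms(2,3) finite_subset by blast
  have "0 < card T"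
    using fin_T assms(4) card_gt_0_iff by blast
  then have "degree ?p < m"
    using assms(4,5) fin_T by (simp add: degree_node_poly card_Diff_singleton)
  then have "0 = (\<Sum>k'\<in>K. poly ?p (x k') * c k')"
    using sum_poly_eq_0_if_power_sums_eq_0[OF moments] by simp
  also have "\<dots> = (\<Sum>k'\<in>T. poly ?p (x k') * c k') + (\<Sum>k'\<in>K - T. poly ?p (x k') * c k')"
    using sum.subset_diff[OF assms(3,2)] by (simp add: add.commute)
  also have "(\<Sum>k'\<in>T. poly ?p (x k') * c k') = poly ?p (x k) * c k"
    using assms(4) fin_T by (subst sum.remove[of _ k]) (auto intro!: sum.neutral poly_node_poly_eq_0)
  finally show ?thesis by simp
qed

lemma power_sums_eq_0_imp_eq_0:
  fixes x c :: "'b \<Rightarrow> 'a::idom"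
  assumes moments: "\<And>l. l < m \<Longrightarrow> (\<Sum>k\<in>K. x k ^ l * c k) = 0"
    and "finite K" "inj_on x K" "card {k \<in> K. c k \<noteq> 0} \<le> m" "k \<in> K"
  shows "c k = 0"
proof (rule ccontr)
  assume "c k \<noteq> 0"
  let ?T = "{k \<in> K. c k \<noteq> 0}"
  have "poly (node_poly x (?T - {k})) (x k) * c k = 0"
    using power_sums_eq_0_node_poly[OF moments assms(2) _ _ assms(4), of k] \<open>c k \<noteq> 0\<close> assms(5)
    by simp
  moreover have "poly (node_poly x (?T - {k})) (x k) \<noteq> 0"
    using assms(2,3,5) by (intro poly_node_poly_nonzero) (auto simp: inj_on_def)
  ultimately show False
    using \<open>c k \<noteq> 0\<close> by simp
qed

lemma power_sums_eq_0_imp_span: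
  fixes x :: "nat \<Rightarrow> 'a::field"
  assumes "inj_on x {..<K}" "K \<le> \<kappa> + m"
  obtains \<beta> where "\<And>U k. (\<And>l. l < m \<Longrightarrow> (\<Sum>k'<K. x k' ^ l * U k') = 0) \<Longrightarrow> k < K \<Longrightarrow>
    U k = (\<Sum>k'<\<kappa>. \<beta> k k' * U k')"
proof
  define \<beta> where "\<beta> k k' = (if k < \<kappa> then of_bool (k' = k)
      else - poly (node_poly x ({\<kappa>..<K} - {k})) (x k') / poly (node_poly x ({\<kappa>..<K} - {k})) (x k))"
    for k k'
  fix U k assume moments: "\<And>l. l < m \<Longrightarrow> (\<Sum>k'<K. x k' ^ l * U k') = 0" and "k < K"
  show "U k = (\<Sum>k'<\<kappa>. \<beta> k k' * U k')"
  proof (cases "k < \<kappa>")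
    case True
    then show ?thesis
      unfolding \<beta>_def by (simp add: of_bool_def if_distrib[of "\<lambda>a. a * _"] cong: if_cong)
  next
    case False
    let ?p = "node_poly x ({\<kappa>..<K} - {k})"
    have "poly ?p (x k) * U k + (\<Sum>k'\<in>{..<K} - {\<kappa>..<K}. poly ?p (x k') * U k') = 0"
      by (rule power_sums_eq_0_node_poly[OF moments]) (use False \<open>k < K\<close> assms(2) in auto)
    moreover have "{..<K} - {\<kappa>..<K} = {..<\<kappa>}"
      using False \<open>k < K\<close> by auto
    ultimately have "poly ?p (x k) * U k + (\<Sum>k'<\<kappa>. poly ?p (x k') * U k') = 0"
      by simp
    moreover have "poly ?p (x k) \<noteq> 0"
    proof (rule poly_node_poly_nonzero)
      show "inj_on x (insert k ({\<kappa>..<K} - {k}))"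
        using \<open>k < K\<close> by (intro inj_on_subset[OF assms(1)]) auto
    qed simp_all
    ultimately have "U k = - (\<Sum>k'<\<kappa>. poly ?p (x k') * U k') / poly ?p (x k)"
      by (simp add: field_simps add_eq_0_iff2)
    also have "\<dots> = (\<Sum>k'<\<kappa>. \<beta> k k' * U k')"
      unfolding \<beta>_def using False by (simp add: sum_divide_distrib sum_negf)
    finally show ?thesis .
  qed
qed

section \<open>The alignment conditions\<close>

lemma add_mod_eq_imp_eq:
  fixes a s s' R :: nat
  assumes "(a + s) mod R = (a + s') mod R" "s < R" "s' < R"
  shows "s = s'"
proof -
  have "s = s'" if "(a + s) mod R = (a + s') mod R" "s < R" "s' < R" "s \<le> s'" for s s'
  proof -
    have "R dvd s' - s"
      using that mod_eq_dvd_iff_nat[of "a + s" "a + s'" R] by simp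
    moreover have "s' - s < R"
      using that by simp
    ultimately show ?thesis
      using that by (metis dvd_imp_le not_less neq0_conv diff_is_0_eq le_antisym)
  qed
  from this[of s s'] this[of s' s] assms show ?thesis
    by (cases "s \<le> s'") auto
qed

locale alignment_dims =
  fixes Kt Kr Mr Nt \<kappa> :: nat
  assumes Kt: "0 < Kt" and Kr: "0 < Kr" and Mr: "0 < Mr" and Nt: "0 < Nt"
    and Nt_le: "Nt \<le> Kr * Mr" and \<kappa>_less: "\<kappa> < Kt"
    and slots_le: "(Kt - 1) * Nt \<le> Kr * (Kt - \<kappa>) * Mr"
begin

abbreviation (input) R :: nat where "R \<equiv> Kr * Mr"
abbreviation (input) m :: nat where "m \<equiv> Kt - \<kappa>"

text \<open>Row \<open>l * R + j * Mr + i\<close> and column \<open>k * Nt + s\<close> carry \<open>k ^ l\<close> times the entry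
  \<open>(i, s)\<close> of \<open>H\<^sub>j\<^sub>k\<close>, so the kernel consists of the stacked vectors with
  \<open>\<Sum>\<^sub>k k ^ l H\<^sub>j\<^sub>k v\<^sub>k = 0\<close> for all receivers \<open>j\<close> and all \<open>l < Kt - \<kappa>\<close>.\<close>
definition align_mat :: "(nat \<times> nat \<times> nat \<times> nat \<Rightarrow> complex) \<Rightarrow> complex mat" where
  "align_mat w = mat (m * R) (Kt * Nt) (\<lambda>(r, c). of_nat (c div Nt) ^ (r div R) *
      w (r mod R div Mr, c div Nt, r mod R mod Mr, c mod Nt))"

definition aug_mat :: "nat \<Rightarrow> (nat \<times> nat \<times> nat \<times> nat \<Rightarrow> complex) \<Rightarrow> complex mat" where
  "aug_mat k0 w = mat (m * R + Nt) (Kt * Nt) (\<lambda>(r, c). if r < m * R then align_mat w $$ (r, c)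
      else of_bool (c = k0 * Nt + (r - m * R)))"

text \<open>\<open>gram_det k0 w \<noteq> 0\<close> says that no nonzero kernel vector of \<open>align_mat w\<close> vanishes
  on block \<open>k0\<close>, and it is a polynomial in the channel entries.\<close>
definition gram_det :: "nat \<Rightarrow> (nat \<times> nat \<times> nat \<times> nat \<Rightarrow> complex) \<Rightarrow> complex" where
  "gram_det k0 w = det (transpose_mat (aug_mat k0 w) * aug_mat k0 w)"

lemma align_mat_carrier [simp]: "align_mat w \<in> carrier_mat (m * R) (Kt * Nt)"
  unfolding align_mat_def by simp

lemma aug_mat_carrier [simp]: "aug_mat k0 w \<in> carrier_mat (m * R + Nt) (Kt * Nt)"
  unfolding aug_mat_def by simp

lemma align_mat_mult_vec:
  assumes v: "v \<in> carrier_vec (Kt * Nt)" and "l < m" "j < Kr" "i < Mr"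
  shows "l * R + (j * Mr + i) < m * R"
    and "(align_mat w *\<^sub>v v) $ (l * R + (j * Mr + i)) =
      (\<Sum>k<Kt. of_nat k ^ l * (\<Sum>s<Nt. w (j, k, i, s) * v $ (k * Nt + s)))"
proof -
  have ji: "j * Mr + i < R"
    using assms(3,4) by (rule block_index_less)
  show row: "l * R + (j * Mr + i) < m * R"
    using assms(2) ji by (rule block_index_less)
  have row_split: "(l * R + (j * Mr + i)) div R = l" "(l * R + (j * Mr + i)) mod R = j * Mr + i"
    "(j * Mr + i) div Mr = j" "(j * Mr + i) mod Mr = i"
    using ji assms(4) Kr Mr by simp_all
  have "(align_mat w *\<^sub>v v) $ (l * R + (j * Mr + i)) =
      (\<Sum>t<Kt * Nt. align_mat w $$ (l * R + (j * Mr + i), t) * v $ t)"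
    by (rule mult_mat_vec_index_sum[OF align_mat_carrier v row])
  also have "\<dots> = (\<Sum>k<Kt. \<Sum>s<Nt. align_mat w $$ (l * R + (j * Mr + i), k * Nt + s) * v $ (k * Nt + s))"
    by (rule sum_blocks)
  also have "\<dots> = (\<Sum>k<Kt. \<Sum>s<Nt. of_nat k ^ l * (w (j, k, i, s) * v $ (k * Nt + s)))"
    using row row_split block_index_less[of _ Kt _ Nt]
    unfolding align_mat_def by (intro sum.cong refl) (simp add: mult.assoc)
  finally show "(align_mat w *\<^sub>v v) $ (l * R + (j * Mr + i)) =
      (\<Sum>k<Kt. of_nat k ^ l * (\<Sum>s<Nt. w (j, k, i, s) * v $ (k * Nt + s)))"
    by (simp add: sum_distrib_left)
qed

lemma aug_mat_mult_vec_eq_0_iff: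
  assumes v: "v \<in> carrier_vec (Kt * Nt)" and k0: "k0 < Kt"
  shows "aug_mat k0 w *\<^sub>v v = 0\<^sub>v (m * R + Nt) \<longleftrightarrow>
    align_mat w *\<^sub>v v = 0\<^sub>v (m * R) \<and> (\<forall>s<Nt. v $ (k0 * Nt + s) = 0)"
proof -
  have top: "(aug_mat k0 w *\<^sub>v v) $ r = (align_mat w *\<^sub>v v) $ r" if "r < m * R" for r
    using that mult_mat_vec_index_sum[OF aug_mat_carrier v, of r] mult_mat_vec_index_sum[OF align_mat_carrier v that]
    unfolding aug_mat_def by (auto intro!: sum.cong)
  have bottom: "(aug_mat k0 w *\<^sub>v v) $ (m * R + s) = v $ (k0 * Nt + s)" if "s < Nt" for s
  proof -
    have "(aug_mat k0 w *\<^sub>v v) $ (m * R + s) = (\<Sum>c<Kt * Nt. of_bool (c = k0 * Nt + s) * v $ c)"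
      using that mult_mat_vec_index_sum[OF aug_mat_carrier v, of "m * R + s"]
      unfolding aug_mat_def by (auto intro!: sum.cong)
    also have "\<dots> = v $ (k0 * Nt + s)"
      using block_index_less[OF k0 that] by (simp add: of_bool_def if_distrib[of "\<lambda>a. a * _"] cong: if_cong)
    finally show ?thesis .
  qed
  have split: "r < m * R \<or> (\<exists>s<Nt. r = m * R + s)" if "r < m * R + Nt" for r
    using that by (metis add_diff_inverse_nat nat_add_left_cancel_less)
  show ?thesis
  proof
    assume "aug_mat k0 w *\<^sub>v v = 0\<^sub>v (m * R + Nt)"
    then have "(aug_mat k0 w *\<^sub>v v) $ r = 0" if "r < m * R + Nt" for r
      using that by simp
    then show "align_mat w *\<^sub>v v = 0\<^sub>v (m * R) \<and> (\<forall>s<Nt. v $ (k0 * Nt + s) = 0)"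
      using top bottom carrier_matD[OF align_mat_carrier]
      by (auto intro!: eq_vecI)
  next
    assume zero: "align_mat w *\<^sub>v v = 0\<^sub>v (m * R) \<and> (\<forall>s<Nt. v $ (k0 * Nt + s) = 0)"
    show "aug_mat k0 w *\<^sub>v v = 0\<^sub>v (m * R + Nt)"
    proof (rule eq_vecI)
      fix r assume "r < dim_vec (0\<^sub>v (m * R + Nt))"
      then consider "r < m * R" | s where "s < Nt" "r = m * R + s"
        using split by auto
      then show "(aug_mat k0 w *\<^sub>v v) $ r = 0\<^sub>v (m * R + Nt) $ r"
        using top bottom zero by cases auto
    qed (simp add: carrier_matD[OF aug_mat_carrier])
  qed
qed

lemma polyfun_gram_det: "polyfun (chan_idx Kr Kt Mr Nt) (gram_det k0)"
proof -
  have entry: "polyfun (chan_idx Kr Kt Mr Nt) (\<lambda>w. aug_mat k0 w $$ (r, c))"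
    if "r < m * R + Nt" "c < Kt * Nt" for r c
  proof (cases "r < m * R")
    case True
    have "(r mod R div Mr, c div Nt, r mod R mod Mr, c mod Nt) \<in> chan_idx Kr Kt Mr Nt"
      using that Kr Mr Nt unfolding chan_idx_def
      by (auto simp: less_mult_imp_div_less)
    then show ?thesis
      using True that unfolding aug_mat_def align_mat_def
      by (auto intro: polyfun.intros)
  qed (use that in \<open>simp add: aug_mat_def polyfun_const\<close>)
  have "polyfun (chan_idx Kr Kt Mr Nt) (\<lambda>w. det (transpose_mat (aug_mat k0 w) * aug_mat k0 w))"
  proof (rule polyfun_det)
    fix a b assume "a < Kt * Nt" "b < Kt * Nt"
    then have "(transpose_mat (aug_mat k0 w) * aug_mat k0 w) $$ (a, b) =
        (\<Sum>r<m * R + Nt. aug_mat k0 w $$ (r, a) * aug_mat k0 w $$ (r, b))" for w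
      by (subst mult_mat_index_sum[of _ _ "m * R + Nt"])
        (auto simp: carrier_matD[OF aug_mat_carrier] intro!: sum.cong)
    then show "polyfun (chan_idx Kr Kt Mr Nt) (\<lambda>w. (transpose_mat (aug_mat k0 w) * aug_mat k0 w) $$ (a, b))"
      using \<open>a < Kt * Nt\<close> \<open>b < Kt * Nt\<close> by (simp, intro polyfun_sum polyfun_mult entry) auto
  qed (rule mult_carrier_mat[of _ _ "m * R + Nt"], auto)
  then show ?thesis
    unfolding gram_det_def .
qed

lemma inj_of_nat_lessThan: "inj_on (of_nat :: nat \<Rightarrow> complex) {..<K}"
  by (simp add: inj_on_def)

definition slot :: "nat \<Rightarrow> nat \<Rightarrow> nat \<Rightarrow> nat" where
  "slot k0 k s = (if k < k0 then k else k - 1) * Nt + s"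

text \<open>The antennas of the transmitters other than \<open>k0\<close> are enumerated by \<open>slot k0\<close>, and
  antenna \<open>p\<close> is wired to the stacked receive row \<open>p mod R\<close>. As \<open>(Kt - 1) * Nt \<le> (Kt - \<kappa>) * R\<close>, every row is hit by
  at most \<open>Kt - \<kappa>\<close> transmitters, which the Vandermonde structure of \<open>align_mat\<close> separates.\<close>
definition witness_channel :: "nat \<Rightarrow> nat \<times> nat \<times> nat \<times> nat \<Rightarrow> complex" where
  "witness_channel k0 = (\<lambda>(j, k, i, s). of_bool (k \<noteq> k0 \<and> slot k0 k s mod R = j * Mr + i))"

lemma slot_less:
  assumes "k < Kt" "k \<noteq> k0" "k0 < Kt" "s < Nt"
  shows "slot k0 k s < m * R"
proof -
  have "(if k < k0 then k else k - 1) < Kt - 1"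
    using assms by auto
  then have "slot k0 k s < (Kt - 1) * Nt"
    unfolding slot_def using assms(4) by (rule block_index_less)
  also have "\<dots> \<le> m * R"
    using slots_le by (simp add: mult_ac)
  finally show ?thesis .
qed

lemma slot_inj:
  assumes "slot k0 k s = slot k0 k' s'" "k \<noteq> k0" "k' \<noteq> k0" "s < Nt" "s' < Nt"
  shows "k = k' \<and> s = s'"
proof -
  have "(if k < k0 then k else k - 1) = (if k' < k0 then k' else k' - 1)" "s = s'"
    using arg_cong[OF assms(1), of "\<lambda>p. p div Nt"] arg_cong[OF assms(1), of "\<lambda>p. p mod Nt"] assms(4,5)
    unfolding slot_def by simp_all
  then show ?thesis
    using assms(2,3) by (auto split: if_splits)
qed

lemma slot_mod_eq_iff:
  assumes "s < Nt" "s' < Nt"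
  shows "slot k0 k s' mod R = slot k0 k s mod R \<longleftrightarrow> s' = s"
  using add_mod_eq_imp_eq[of _ s' R s] assms Nt_le unfolding slot_def by auto

lemma card_slots_to_row_le:
  assumes "k0 < Kt"
  shows "card {k \<in> {..<Kt}. k \<noteq> k0 \<and> (\<exists>s<Nt. slot k0 k s mod R = r)} \<le> m"
proof -
  define P where "P = {(k, s). k < Kt \<and> k \<noteq> k0 \<and> s < Nt \<and> slot k0 k s mod R = r}"
  have "inj_on (\<lambda>(k, s). slot k0 k s div R) P"
  proof (rule inj_onI, clarify)
    fix k s k' s' assume P: "(k, s) \<in> P" "(k', s') \<in> P"
      and div: "slot k0 k s div R = slot k0 k' s' div R"
    have "slot k0 k s mod R = slot k0 k' s' mod R"
      using P unfolding P_def by simp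
    then have "slot k0 k s = slot k0 k' s'"
      using div by (metis div_mult_mod_eq)
    then show "k = k' \<and> s = s'"
      by (rule slot_inj) (use P in \<open>auto simp: P_def\<close>)
  qed
  moreover have "(\<lambda>(k, s). slot k0 k s div R) ` P \<subseteq> {..<m}"
    using slot_less[OF _ _ assms] unfolding P_def by (auto simp: less_mult_imp_div_less)
  ultimately have "card P \<le> m"
    using card_inj_on_le[of _ P "{..<m}"] by auto
  moreover have "{k \<in> {..<Kt}. k \<noteq> k0 \<and> (\<exists>s<Nt. slot k0 k s mod R = r)} = fst ` P"
    unfolding P_def by force
  moreover have "finite P"
    unfolding P_def by (rule finite_subset[of _ "{..<Kt} \<times> {..<Nt}"]) auto
  ultimately show ?thesis
    using card_image_le le_trans by metis
qed

lemma witness_block_entry_eq_0: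
  assumes k0: "k0 < Kt" and v: "v \<in> carrier_vec (Kt * Nt)"
    and align: "align_mat (witness_channel k0) *\<^sub>v v = 0\<^sub>v (m * R)"
    and k: "k < Kt" "k \<noteq> k0" and s: "s < Nt"
  shows "v $ (k * Nt + s) = 0"
proof -
  let ?w = "witness_channel k0"
  define r where "r = slot k0 k s mod R"
  define j where "j = r div Mr"
  define i where "i = r mod Mr"
  have "r < R"
    unfolding r_def using Kr Mr by simp
  then have ji: "j < Kr" "i < Mr" "j * Mr + i = r"
    unfolding j_def i_def using Mr by (simp_all add: less_mult_imp_div_less)
  define c where "c k' = (\<Sum>s'<Nt. ?w (j, k', i, s') * v $ (k' * Nt + s'))" for k'
  have moments: "(\<Sum>k'\<in>{..<Kt}. of_nat k' ^ l * c k') = 0" if "l < m" for l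
    using align_mat_mult_vec(2)[OF v that ji(1,2), of ?w] align_mat_mult_vec(1)[OF v that ji(1,2)] align
    unfolding c_def by simp
  have "{k' \<in> {..<Kt}. c k' \<noteq> 0} \<subseteq> {k' \<in> {..<Kt}. k' \<noteq> k0 \<and> (\<exists>s'<Nt. slot k0 k' s' mod R = r)}"
    unfolding c_def witness_channel_def using ji(3) by (force intro: sum.neutral)
  then have "card {k' \<in> {..<Kt}. c k' \<noteq> 0} \<le> card {k' \<in> {..<Kt}. k' \<noteq> k0 \<and> (\<exists>s'<Nt. slot k0 k' s' mod R = r)}"
    by (rule card_mono[rotated]) simp
  also have "\<dots> \<le> m"
    by (rule card_slots_to_row_le[OF k0])
  finally have card: "card {k' \<in> {..<Kt}. c k' \<noteq> 0} \<le> m" .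
  have "c k = 0"
    using power_sums_eq_0_imp_eq_0[OF moments _ inj_of_nat_lessThan card] k by simp
  moreover have "c k = v $ (k * Nt + s)"
    unfolding c_def witness_channel_def using k s ji(3) slot_mod_eq_iff[OF s, of _ k0 k]
    by (simp add: r_def of_bool_def if_distrib[of "\<lambda>a. a * _"] cong: if_cong)
  ultimately show ?thesis
    by simp
qed

lemma witness_kernel_trivial:
  assumes k0: "k0 < Kt" and v: "v \<in> carrier_vec (Kt * Nt)"
    and "aug_mat k0 (witness_channel k0) *\<^sub>v v = 0\<^sub>v (m * R + Nt)"
  shows "v = 0\<^sub>v (Kt * Nt)"
proof -
  have align: "align_mat (witness_channel k0) *\<^sub>v v = 0\<^sub>v (m * R)"
    and block: "\<And>s. s < Nt \<Longrightarrow> v $ (k0 * Nt + s) = 0"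
    using assms aug_mat_mult_vec_eq_0_iff by auto
  have "v $ (k * Nt + s) = 0" if "k < Kt" "s < Nt" for k s
    using block witness_block_entry_eq_0[OF k0 v align] that by (cases "k = k0") auto
  then show ?thesis
    using v by (intro eq_vecI) (auto, metis div_mult_mod_eq less_mult_imp_div_less mod_less_divisor Nt)
qed

lemma gram_det_witness: "k0 < Kt \<Longrightarrow> gram_det k0 (witness_channel k0) \<noteq> 0"
  unfolding gram_det_def
  by (intro det_transpose_mult_nonzero_if_self_conjugate[OF aug_mat_carrier] witness_kernel_trivial)
    (auto simp: aug_mat_def align_mat_def witness_channel_def)

lemma rank_row_block_eq_if_gram_det_nonzero:
  assumes gram: "gram_det k w \<noteq> 0" and k: "k < Kt"
    and B: "B \<in> carrier_mat (Kt * Nt) d" and AB: "align_mat w * B = 0\<^sub>m (m * R) d"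
    and B_inj: "\<And>a. a \<in> carrier_vec d \<Longrightarrow> B *\<^sub>v a = 0\<^sub>v (Kt * Nt) \<Longrightarrow> a = 0\<^sub>v d"
  shows "vec_space.rank Nt (row_block Nt k B) = d"
proof (rule vec_space.rank_eq_dim_col_if_kernel_trivial)
  show "row_block Nt k B \<in> carrier_mat Nt d"
    using B by (metis carrier_matD(2) row_block_carrier)
  fix a :: "complex vec" assume a: "a \<in> carrier_vec d" and Va: "row_block Nt k B *\<^sub>v a = 0\<^sub>v Nt"
  have Ba: "B *\<^sub>v a \<in> carrier_vec (Kt * Nt)"
    using B a by simp
  have "align_mat w *\<^sub>v (B *\<^sub>v a) = (align_mat w * B) *\<^sub>v a"
    using assoc_mult_mat_vec[OF align_mat_carrier B a] by simp
  also have "\<dots> = 0\<^sub>v (m * R)"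
    unfolding AB using a by (intro eq_vecI) auto
  finally have "align_mat w *\<^sub>v (B *\<^sub>v a) = 0\<^sub>v (m * R)" .
  moreover have "(B *\<^sub>v a) $ (k * Nt + s) = 0" if "s < Nt" for s
    using row_block_mult_mat_vec[OF that, of k B a] Va B a that block_index_less[OF k that] by simp
  ultimately have "B *\<^sub>v a = 0\<^sub>v (Kt * Nt)"
    using det_transpose_mult_nonzero_imp_kernel_trivial[OF aug_mat_carrier gram[unfolded gram_det_def] Ba]
      aug_mat_mult_vec_eq_0_iff[OF Ba k] by blast
  then show "a = 0\<^sub>v d"
    using B_inj a by blast
qed

lemma rank_hcat_channel_row_block_le:
  assumes B: "B \<in> carrier_mat (Kt * Nt) d" and AB: "align_mat w * B = 0\<^sub>m (m * R) d" and j: "j < Kr"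
  shows "vec_space.rank Mr (hcat Kt d (\<lambda>k. channel Mr Nt w j k * row_block Nt k B)) \<le> \<kappa> * d"
proof -
  let ?HV = "\<lambda>k. channel Mr Nt w j k * row_block Nt k B"
  obtain \<beta> where \<beta>: "\<And>U k. (\<And>l. l < m \<Longrightarrow> (\<Sum>k'<Kt. of_nat k' ^ l * U k') = 0) \<Longrightarrow> k < Kt \<Longrightarrow>
      U k = (\<Sum>k'<\<kappa>. \<beta> k k' * (U k' :: complex))"
    using power_sums_eq_0_imp_span[where K=Kt and \<kappa>=\<kappa> and m=m, OF inj_of_nat_lessThan] \<kappa>_less by auto
  have col_B: "col B c \<in> carrier_vec (Kt * Nt)" for c
    using B by (metis carrier_matD(1) carrier_vecI dim_col)
  have V: "row_block Nt k B \<in> carrier_mat Nt d" for k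
    using B by (metis carrier_matD(2) row_block_carrier)
  have HV: "?HV k \<in> carrier_mat Mr d" for k
    using V unfolding channel_def by (intro mult_carrier_mat[of _ _ Nt]) auto
  have HV_entry: "?HV k $$ (i, c) = (\<Sum>s<Nt. w (j, k, i, s) * col B c $ (k * Nt + s))"
    if "i < Mr" "c < d" "k < Kt" for i c k
  proof -
    have "?HV k $$ (i, c) = (\<Sum>s<Nt. channel Mr Nt w j k $$ (i, s) * row_block Nt k B $$ (s, c))"
      by (rule mult_mat_index_sum[OF _ V that(1,2)]) (simp add: channel_def)
    also have "\<dots> = (\<Sum>s<Nt. w (j, k, i, s) * col B c $ (k * Nt + s))"
      using that B block_index_less[OF that(3)]
      unfolding channel_def row_block_def by (intro sum.cong) auto
    finally show ?thesis .
  qed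
  show ?thesis
  proof (rule rank_hcat_le_if_blocks_span[OF Kt HV])
    fix k i c assume "k < Kt" "i < Mr" "c < d"
    have "(\<Sum>k'<Kt. of_nat k' ^ l * ?HV k' $$ (i, c)) = 0" if "l < m" for l
    proof -
      have row: "l * R + (j * Mr + i) < m * R"
        by (rule align_mat_mult_vec(1)[OF col_B that j \<open>i < Mr\<close>])
      have "(align_mat w *\<^sub>v col B c) $ (l * R + (j * Mr + i)) = (align_mat w * B) $$ (l * R + (j * Mr + i), c)"
        using row \<open>c < d\<close> carrier_matD[OF align_mat_carrier] carrier_matD[OF B] by simp
      also have "\<dots> = 0"
        unfolding AB using row \<open>c < d\<close> by simp
      finally have "(align_mat w *\<^sub>v col B c) $ (l * R + (j * Mr + i)) = 0" .
      moreover have "(\<Sum>k'<Kt. of_nat k' ^ l * ?HV k' $$ (i, c)) =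
          (\<Sum>k'<Kt. of_nat k' ^ l * (\<Sum>s<Nt. w (j, k', i, s) * col B c $ (k' * Nt + s)))"
        using HV_entry \<open>i < Mr\<close> \<open>c < d\<close> by (intro sum.cong) simp_all
      ultimately show ?thesis
        using align_mat_mult_vec(2)[OF col_B that j \<open>i < Mr\<close>, of w] by simp
    qed
    then show "?HV k $$ (i, c) = (\<Sum>k'<\<kappa>. \<beta> k k' * ?HV k' $$ (i, c))"
      by (rule \<beta>[OF _ \<open>k < Kt\<close>])
  qed
qed

lemma precoders_exist:
  assumes gram: "\<And>k. k < Kt \<Longrightarrow> gram_det k w \<noteq> 0" and d: "m * R + d \<le> Kt * Nt"
  shows "\<exists>V :: nat \<Rightarrow> complex mat.
    (\<forall>k<Kt. V k \<in> carrier_mat Nt d \<and> vec_space.rank Nt (V k) = d) \<and>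
    (\<forall>j<Kr. vec_space.rank Mr (hcat Kt d (\<lambda>k. channel Mr Nt w j k * V k)) \<le> \<kappa> * d)"
proof -
  obtain B where B: "B \<in> carrier_mat (Kt * Nt) d" and AB: "align_mat w * B = 0\<^sub>m (m * R) d"
    and B_inj: "\<And>a. a \<in> carrier_vec d \<Longrightarrow> B *\<^sub>v a = 0\<^sub>v (Kt * Nt) \<Longrightarrow> a = 0\<^sub>v d"
    using kernel_basis_mat_exists[OF align_mat_carrier d] by blast
  define V where "V k = row_block Nt k B" for k
  have V: "V k \<in> carrier_mat Nt d" for k
    using B unfolding V_def by (metis carrier_matD(2) row_block_carrier)
  have rank_V: "vec_space.rank Nt (V k) = d" if "k < Kt" for k
    unfolding V_def by (rule rank_row_block_eq_if_gram_det_nonzero[OF gram[OF that] that B AB B_inj])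
  have rank_H: "vec_space.rank Mr (hcat Kt d (\<lambda>k. channel Mr Nt w j k * V k)) \<le> \<kappa> * d"
    if "j < Kr" for j
    unfolding V_def by (rule rank_hcat_channel_row_block_le[OF B AB that])
  show ?thesis
    using V rank_V rank_H by (intro exI[of _ V]) simp
qed

end

section \<open>Gaussian channels\<close>

lemma sets_cgauss [measurable_cong]: "sets cgauss = sets borel"
  by (simp add: cgauss_def)

lemma sigma_finite_cgauss: "sigma_finite_measure cgauss"
  unfolding cgauss_def
  by (subst sigma_finite_measure.sigma_finite_iff_density_finite[OF sigma_finite_lborel]) auto

lemma AE_cgauss_not_in_finite:
  assumes "finite A"
  shows "AE z in cgauss. z \<notin> A"
proof -
  have "AE z in lborel. z \<notin> A"
    using assms by (intro AE_not_in countable_imp_null_set_lborel countable_finite)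
  then show ?thesis
    unfolding cgauss_def by (subst AE_density) (auto elim: AE_mp)
qed

theorem proposition1:
  fixes Kt Kr Mr Nt \<kappa> d :: nat
  assumes "0 < Kt" and "0 < Kr" and "0 < Mr" and "0 < Nt"
    and "Nt \<le> Kr * Mr"
    and "\<kappa> \<le> Kt - 1"
    and "(Kt - 1) * Nt \<le> Kr * (Kt - \<kappa>) * Mr"
    and "Kr * (Kt - \<kappa>) * Mr < Kt * Nt"
    and "0 < d"
    and "d \<le> Kt * Nt - Kr * (Kt - \<kappa>) * Mr"
  shows "AE w in channel_measure Kr Kt Mr Nt.
           \<exists>V :: nat \<Rightarrow> complex mat.
             (\<forall>k<Kt. V k \<in> carrier_mat Nt d \<and> vec_space.rank Nt (V k) = d) \<and>
             (\<forall>j<Kr. vec_space.rank Mr (hcat Kt d (\<lambda>k. channel Mr Nt w j k * V k)) \<le> \<kappa> * d)"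
proof -
  interpret alignment_dims Kt Kr Mr Nt \<kappa>
    using assms by unfold_locales auto
  have "AE w in channel_measure Kr Kt Mr Nt. \<forall>k\<in>{..<Kt}. gram_det k w \<noteq> 0"
  proof (rule AE_finite_allI)
    fix k assume "k \<in> {..<Kt}"
    then show "AE w in channel_measure Kr Kt Mr Nt. gram_det k w \<noteq> 0"
      unfolding channel_measure_def
      by (intro AE_polyfun_nonzero[OF _ _ _ _ polyfun_gram_det gram_det_witness])
        (auto simp: product_sigma_finite_def sigma_finite_cgauss sets_cgauss AE_cgauss_not_in_finite
          chan_idx_def)
  qed simp
  moreover have "(Kt - \<kappa>) * (Kr * Mr) + d \<le> Kt * Nt"
    using assms(8,10) by (simp add: mult_ac)
  ultimately show ?thesis
    by (auto elim!: eventually_mono intro: precoders_exist)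
qed

end
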